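(* Let $\widehat Q^{(1)}_{n,m},\dots,\widehat Q^{(m)}_{n,m}$ be the subset-based variational posteriors computed on disjoint groups $G_1,\dots,G_m$; they are independent random probability measures on $\Theta$. Let $0\le\kappa<1/3$. Suppose $\epsilon>0$ is such that for every $j$ with $1\le j\le\lfloor(1-\kappa)m\rfloor+1$, \[ \Pr\big(d_{W_{1,\rho}}(\widehat Q^{(j)}_{n,m},\delta_0)>\epsilon\big)\le\tfrac14 . \] Here the indices $1,\dots,\lfloor(1-\kappa)m\rfloor+1$ label uncontaminated groups; the other groups are arbitrary. Then the Wasserstein metric median $Q^*_{\mathrm{Met}}$ satisfies \[ \Pr\big(d_{W_{1,\rho}}(Q^*_{\mathrm{Met}},\delta_0)>3\epsilon\big)\le\Big[e^{(1-\kappa)\psi\left(\frac{1/2-\kappa}{1-\kappa},\frac14\right)}\Big]^{-m}. \]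
   Context: $\Theta$ carries the Hellinger metric $\rho(\theta_1,\theta_2)=h(P_{\theta_1},P_{\theta_2})$, and $\delta_0$ is the Dirac measure at $\theta_0$. The distance \[ d_{W_{1,\rho}}(\mu_1,\mu_2)=\inf_{\gamma}\int\rho(x,y)\,d\gamma(x,y) \] is the 1-Wasserstein distance with respect to $\rho$, the infimum running over couplings $\gamma$ of $\mu_1,\mu_2$. The subset-based variational posterior is $\widehat Q^{(j)}_{n,m}=\arg\min_{Q\in\mathcal Q}\mathrm{KL}(Q,\Pi_{n,m}(\cdot\mid G_j))$, where \[ \Pi_{n,m}(B\mid G_j)\propto\int_B\Big(\prod_{i\in G_j}p_\theta(X_i)\Big)^m d\Pi(\theta). \] Wasserstein metric median: let \[ \varepsilon_*=\inf\Big\{\varepsilon>0:\ \exists\, j\in\{1,\dots,m\},\ I(j)\subset\{1,\dots,m\}\text{ with } |I(j)|>\tfrac m2 \text{ and } d_{W_{1,\rho}}(\widehat Q^{(i)}_{n,m},\widehat Q^{(j)}_{n,m})\le2\varepsilon\ \ \forall i\in I(j)\Big\}, \] let $j_*$ be a corresponding index (ties broken arbitrarily), and set $Q^*_{\mathrm{Met}}=\widehat Q^{(j_* )}_{n,m}$. Define $\psi(\alpha,q)=(1-\alpha)\log\frac{1-\alpha}{1-q}+\alpha\log\frac{\alpha}{q}$. *)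

theory Defs
  imports "HOL-Probability.Probability"
begin

definition hellinger :: "'x measure \<Rightarrow> ('t \<Rightarrow> 'x \<Rightarrow> real) \<Rightarrow> 't \<Rightarrow> 't \<Rightarrow> real" where
  "hellinger nu p t1 t2 =
     sqrt ((1/2) * (\<integral>x. (sqrt (p t1 x) - sqrt (p t2 x))^2 \<partial>nu))"

definition couplings :: "'t measure \<Rightarrow> 't measure \<Rightarrow> 't measure \<Rightarrow> ('t \<times> 't) measure set" where
  "couplings T mu1 mu2 =
     {g. sets g = sets (T \<Otimes>\<^sub>M T) \<and> distr g T fst = mu1 \<and> distr g T snd = mu2}"

definition wasserstein1 :: "('t \<Rightarrow> 't \<Rightarrow> real) \<Rightarrow> 't measure \<Rightarrow> 't measure \<Rightarrow> 't measure \<Rightarrow> ennreal" where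
  "wasserstein1 rho T mu1 mu2 =
     (INF g \<in> couplings T mu1 mu2. \<integral>\<^sup>+ z. ennreal (rho (fst z) (snd z)) \<partial>g)"

definition eps_star :: "('m \<Rightarrow> 'm \<Rightarrow> ennreal) \<Rightarrow> (nat \<Rightarrow> 'm) \<Rightarrow> nat \<Rightarrow> real" where
  "eps_star d q m = Inf {eps. eps > 0 \<and>
      (\<exists>j\<in>{1..m}. \<exists>I. I \<subseteq> {1..m} \<and> real (card I) > real m / 2 \<and>
          (\<forall>i\<in>I. d (q i) (q j) \<le> ennreal (2 * eps)))}"

definition metric_median_index :: "('m \<Rightarrow> 'm \<Rightarrow> ennreal) \<Rightarrow> (nat \<Rightarrow> 'm) \<Rightarrow> nat \<Rightarrow> nat \<Rightarrow> bool" where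
  "metric_median_index d q m j \<longleftrightarrow> j \<in> {1..m} \<and>
      (\<exists>I. I \<subseteq> {1..m} \<and> real (card I) > real m / 2 \<and>
          (\<forall>i\<in>I. d (q i) (q j) \<le> ennreal (2 * eps_star d q m)))"

definition psi :: "real \<Rightarrow> real \<Rightarrow> real" where
  "psi a q = (1 - a) * ln ((1 - a) / (1 - q)) + a * ln (a / q)"

text \<open>Outer probability (the event for the metric median need not be measurable,
  since ties are broken arbitrarily).\<close>
definition outer_prob :: "'a measure \<Rightarrow> 'a set \<Rightarrow> real" where
  "outer_prob M S = (INF A \<in> {A \<in> sets M. S \<inter> space M \<subseteq> A}. measure M A)"

end

theory Submission
  imports Defs
begin

text \<open>The Hellinger distance is a pseudometric (Minkowski's inequality in \<open>L\<^sup>2\<close>), so the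
  Wasserstein distance \<open>W\<close> of a probability measure to \<open>\<delta>\<^sub>0\<close> is its expected distance
  \<open>D\<close> to \<open>\<theta>\<^sub>0\<close>, and \<open>W(\<mu>, \<nu>) \<le> D(\<mu>) + D(\<nu>)\<close>, \<open>D(\<nu>) \<le> W(\<mu>, \<nu>) + D(\<mu>)\<close>.
  If more than \<open>m/2\<close> subset posteriors have \<open>D \<le> \<epsilon>\<close>, they are pairwise \<open>2\<epsilon>\<close>-close, so
  \<open>\<epsilon>\<^sub>* \<le> \<epsilon>\<close>; the majority witnessing the median then meets this majority, whence
  \<open>D(Q\<^sup>*) \<le> 2\<epsilon> + \<epsilon>\<close>. So if \<open>D(Q\<^sup>*) > 3\<epsilon>\<close>, at least \<open>n - m/2\<close> of the \<open>n \<ge> (1-\<kappa>)m\<close>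
  uncontaminated posteriors satisfy \<open>D > \<epsilon>\<close>, independent events of probability at most
  \<open>1/4\<close>. An exponential Markov bound with the tilt \<open>r = 3\<alpha>/(1-\<alpha>)\<close>,
  \<open>\<alpha> = (1/2-\<kappa>)/(1-\<kappa>)\<close>, which is optimal and turns the bound into a relative entropy,
  gives \<open>exp (-(1-\<kappa>) m \<psi>(\<alpha>, 1/4))\<close>.\<close>

lemma integral_abs_mult_le_sqrt:
  fixes u v :: "'a \<Rightarrow> real"
  assumes [measurable]: "u \<in> borel_measurable M" "v \<in> borel_measurable M"
    and "integrable M (\<lambda>x. (u x)\<^sup>2)" "integrable M (\<lambda>x. (v x)\<^sup>2)"
  shows "(\<integral>x. \<bar>u x * v x\<bar> \<partial>M) \<le> sqrt (\<integral>x. (u x)\<^sup>2 \<partial>M) * sqrt (\<integral>x. (v x)\<^sup>2 \<partial>M)"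
proof -
  have square: "(\<integral>\<^sup>+x. ennreal \<bar>f x\<bar> ^ 2 \<partial>M) = ennreal (\<integral>x. (f x)\<^sup>2 \<partial>M)"
    if "integrable M (\<lambda>x. (f x)\<^sup>2)" for f :: "'a \<Rightarrow> real"
  proof -
    have "(\<integral>\<^sup>+x. ennreal \<bar>f x\<bar> ^ 2 \<partial>M) = (\<integral>\<^sup>+x. ennreal ((f x)\<^sup>2) \<partial>M)"
      by (simp add: ennreal_power)
    also have "\<dots> = ennreal (\<integral>x. (f x)\<^sup>2 \<partial>M)"
      using that by (simp add: nn_integral_eq_integral)
    finally show ?thesis .
  qed
  have "(\<integral>\<^sup>+x. ennreal \<bar>u x * v x\<bar> \<partial>M)\<^sup>2
      \<le> ennreal ((\<integral>x. (u x)\<^sup>2 \<partial>M) * (\<integral>x. (v x)\<^sup>2 \<partial>M))"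
    using Cauchy_Schwarz_nn_integral[of "\<lambda>x. ennreal \<bar>u x\<bar>" M "\<lambda>x. ennreal \<bar>v x\<bar>"] assms
    by (simp add: square abs_mult ennreal_mult ennreal_mult')
  then have "(\<integral>x. \<bar>u x * v x\<bar> \<partial>M)\<^sup>2 \<le> (\<integral>x. (u x)\<^sup>2 \<partial>M) * (\<integral>x. (v x)\<^sup>2 \<partial>M)"
    by (simp add: integral_eq_nn_integral power2_eq_square enn2real_mult[symmetric] enn2real_leI)
  then show ?thesis
    by (simp add: real_le_rsqrt real_sqrt_mult[symmetric])
qed

lemma sqrt_integral_power2_add_le:
  fixes u v :: "'a \<Rightarrow> real"
  assumes [measurable]: "u \<in> borel_measurable M" "v \<in> borel_measurable M"
    and iu: "integrable M (\<lambda>x. (u x)\<^sup>2)" and iv: "integrable M (\<lambda>x. (v x)\<^sup>2)"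
  shows "sqrt (\<integral>x. (u x + v x)\<^sup>2 \<partial>M) \<le> sqrt (\<integral>x. (u x)\<^sup>2 \<partial>M) + sqrt (\<integral>x. (v x)\<^sup>2 \<partial>M)"
proof -
  have iuv: "integrable M (\<lambda>x. u x * v x)"
  proof (rule Bochner_Integration.integrable_bound)
    show "integrable M (\<lambda>x. (u x)\<^sup>2 + (v x)\<^sup>2)" using iu iv by simp
    show "AE x in M. norm (u x * v x) \<le> norm ((u x)\<^sup>2 + (v x)\<^sup>2)"
    proof (rule AE_I2)
      fix x
      have "2 * (\<bar>u x\<bar> * \<bar>v x\<bar>) \<le> (u x)\<^sup>2 + (v x)\<^sup>2"
        using sum_squares_bound[of "\<bar>u x\<bar>" "\<bar>v x\<bar>"] by simp
      moreover have "0 \<le> \<bar>u x\<bar> * \<bar>v x\<bar>" "0 \<le> (u x)\<^sup>2 + (v x)\<^sup>2"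
        by simp_all
      ultimately show "norm (u x * v x) \<le> norm ((u x)\<^sup>2 + (v x)\<^sup>2)"
        unfolding real_norm_def abs_mult by linarith
    qed
  qed simp
  have "(\<integral>x. (u x + v x)\<^sup>2 \<partial>M) = (\<integral>x. (u x)\<^sup>2 + 2 * (u x * v x) + (v x)\<^sup>2 \<partial>M)"
    by (simp add: power2_sum algebra_simps)
  also have "\<dots> = (\<integral>x. (u x)\<^sup>2 \<partial>M) + 2 * (\<integral>x. u x * v x \<partial>M) + (\<integral>x. (v x)\<^sup>2 \<partial>M)"
    using iu iv iuv by simp
  also have "\<dots> \<le> (\<integral>x. (u x)\<^sup>2 \<partial>M) + 2 * (\<integral>x. \<bar>u x * v x\<bar> \<partial>M) + (\<integral>x. (v x)\<^sup>2 \<partial>M)"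
    using iuv by (simp add: integral_mono)
  also have "\<dots> \<le> (sqrt (\<integral>x. (u x)\<^sup>2 \<partial>M) + sqrt (\<integral>x. (v x)\<^sup>2 \<partial>M))\<^sup>2"
    using integral_abs_mult_le_sqrt[OF assms] by (simp add: power2_sum)
  finally show ?thesis
    by (simp add: real_le_lsqrt)
qed

lemma integrable_sqrt_diff_power2:
  fixes f g :: "'a \<Rightarrow> real"
  assumes [measurable]: "f \<in> borel_measurable M" "g \<in> borel_measurable M"
    and nonneg: "\<And>x. x \<in> space M \<Longrightarrow> 0 \<le> f x" "\<And>x. x \<in> space M \<Longrightarrow> 0 \<le> g x"
    and "integrable M f" "integrable M g"
  shows "integrable M (\<lambda>x. (sqrt (f x) - sqrt (g x))\<^sup>2)"
proof (rule Bochner_Integration.integrable_bound)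
  show "integrable M (\<lambda>x. f x + g x)"
    using assms by simp
  show "AE x in M. norm ((sqrt (f x) - sqrt (g x))\<^sup>2) \<le> norm (f x + g x)"
  proof (rule AE_I2)
    fix x assume "x \<in> space M"
    then have "0 \<le> f x" "0 \<le> g x"
      using nonneg by auto
    moreover have "(sqrt (f x) - sqrt (g x))\<^sup>2 = f x + g x - 2 * (sqrt (f x) * sqrt (g x))"
      using calculation by (simp add: power2_diff)
    moreover have "0 \<le> sqrt (f x) * sqrt (g x)"
      using calculation by simp
    moreover have "0 \<le> f x + g x - 2 * (sqrt (f x) * sqrt (g x))"
      using calculation by (metis zero_le_power2)
    ultimately show "norm ((sqrt (f x) - sqrt (g x))\<^sup>2) \<le> norm (f x + g x)"
      by simp
  qed
qed simp

lemma hellinger_triangle: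
  assumes meas: "\<And>t. t \<in> S \<Longrightarrow> p t \<in> borel_measurable nu"
    and nonneg: "\<And>t x. t \<in> S \<Longrightarrow> x \<in> space nu \<Longrightarrow> 0 \<le> p t x"
    and int: "\<And>t. t \<in> S \<Longrightarrow> integrable nu (p t)"
    and S: "a \<in> S" "b \<in> S" "c \<in> S"
  shows "hellinger nu p a c \<le> hellinger nu p a b + hellinger nu p b c"
proof -
  define D where "D s t = sqrt (\<integral>x. (sqrt (p s x) - sqrt (p t x))\<^sup>2 \<partial>nu)" for s t
  have hellinger_eq: "hellinger nu p s t = sqrt (1/2) * D s t" for s t
    unfolding hellinger_def D_def real_sqrt_mult ..
  have sq_int: "integrable nu (\<lambda>x. (sqrt (p s x) - sqrt (p t x))\<^sup>2)" if "s \<in> S" "t \<in> S" for s t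
    using that by (intro integrable_sqrt_diff_power2 meas nonneg int)
  have "D a c \<le> D a b + D b c"
    using sqrt_integral_power2_add_le[of "\<lambda>x. sqrt (p a x) - sqrt (p b x)" nu
        "\<lambda>x. sqrt (p b x) - sqrt (p c x)"] sq_int S meas
    by (simp add: D_def)
  then show ?thesis
    unfolding hellinger_eq distrib_left[symmetric] by (simp add: mult_left_mono)
qed

locale measurable_pseudometric =
  fixes T :: "'t measure" and rho :: "'t \<Rightarrow> 't \<Rightarrow> real"
  assumes measurable_rho: "(\<lambda>z. rho (fst z) (snd z)) \<in> borel_measurable (T \<Otimes>\<^sub>M T)"
    and rho_nonneg: "0 \<le> rho a b"
    and rho_self: "rho a a = 0"
    and rho_sym: "rho a b = rho b a"
    and rho_triangle: "a \<in> space T \<Longrightarrow> b \<in> space T \<Longrightarrow> c \<in> space T \<Longrightarrow> rho a c \<le> rho a b + rho b c"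

lemma measurable_pseudometric_hellinger:
  assumes model_meas: "(\<lambda>(t, x). p t x) \<in> borel_measurable (T \<Otimes>\<^sub>M nu)"
    and sf: "sigma_finite_measure nu"
    and dens_nonneg: "\<And>t x. t \<in> space T \<Longrightarrow> x \<in> space nu \<Longrightarrow> 0 \<le> p t x"
    and dens_one: "\<And>t. t \<in> space T \<Longrightarrow> (\<integral>\<^sup>+ x. ennreal (p t x) \<partial>nu) = 1"
  shows "measurable_pseudometric T (hellinger nu p)"
proof
  have p_meas: "p t \<in> borel_measurable nu" if "t \<in> space T" for t
    using measurable_compose[OF measurable_Pair1'[OF that] model_meas] by simp
  have p_int: "integrable nu (p t)" if "t \<in> space T" for t
    using that dens_nonneg
    by (intro integrableI_nn_integral_finite[OF p_meas[OF that] _ dens_one[OF that, folded ennreal_1]]) auto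
  show "hellinger nu p a c \<le> hellinger nu p a b + hellinger nu p b c"
    if "a \<in> space T" "b \<in> space T" "c \<in> space T" for a b c
    by (rule hellinger_triangle[OF p_meas dens_nonneg p_int that])
  have "(\<lambda>y. (\<lambda>(t, x). p t x) (fst (fst y), snd y)) \<in> borel_measurable ((T \<Otimes>\<^sub>M T) \<Otimes>\<^sub>M nu)"
    by (rule measurable_compose[OF _ model_meas]) measurable
  moreover have "(\<lambda>y. (\<lambda>(t, x). p t x) (snd (fst y), snd y)) \<in> borel_measurable ((T \<Otimes>\<^sub>M T) \<Otimes>\<^sub>M nu)"
    by (rule measurable_compose[OF _ model_meas]) measurable
  ultimately have [measurable]: "(\<lambda>y. p (fst (fst y)) (snd y)) \<in> borel_measurable ((T \<Otimes>\<^sub>M T) \<Otimes>\<^sub>M nu)"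
    "(\<lambda>y. p (snd (fst y)) (snd y)) \<in> borel_measurable ((T \<Otimes>\<^sub>M T) \<Otimes>\<^sub>M nu)"
    by simp_all
  have "(\<lambda>(z, x). (sqrt (p (fst z) x) - sqrt (p (snd z) x))\<^sup>2) \<in> borel_measurable ((T \<Otimes>\<^sub>M T) \<Otimes>\<^sub>M nu)"
    unfolding split_beta' by measurable
  then have "(\<lambda>z. \<integral>x. (sqrt (p (fst z) x) - sqrt (p (snd z) x))\<^sup>2 \<partial>nu) \<in> borel_measurable (T \<Otimes>\<^sub>M T)"
    by (rule sigma_finite_measure.borel_measurable_lebesgue_integral[OF sf])
  then show "(\<lambda>z. hellinger nu p (fst z) (snd z)) \<in> borel_measurable (T \<Otimes>\<^sub>M T)"
    unfolding hellinger_def by measurable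
  show "0 \<le> hellinger nu p a b" for a b
    by (simp add: hellinger_def)
  show "hellinger nu p a a = 0" for a
    by (simp add: hellinger_def)
  show "hellinger nu p a b = hellinger nu p b a" for a b
    unfolding hellinger_def by (simp only: power2_commute[of "sqrt (p a x)" "sqrt (p b x)" for x])
qed

lemma sets_coupling: "g \<in> couplings T mu1 mu2 \<Longrightarrow> sets g = sets (T \<Otimes>\<^sub>M T)"
  by (simp add: couplings_def)

lemma space_coupling: "g \<in> couplings T mu1 mu2 \<Longrightarrow> space g = space T \<times> space T"
  by (simp add: sets_eq_imp_space_eq[OF sets_coupling] space_pair_measure)

lemma measurable_coupling:
  "g \<in> couplings T mu1 mu2 \<Longrightarrow> f \<in> borel_measurable (T \<Otimes>\<^sub>M T) \<Longrightarrow> f \<in> borel_measurable g"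
  by (simp add: measurable_cong_sets[OF sets_coupling refl])

lemma nn_integral_coupling_fst:
  assumes g: "g \<in> couplings T mu1 mu2" and f: "f \<in> borel_measurable T"
  shows "(\<integral>\<^sup>+ z. f (fst z) \<partial>g) = (\<integral>\<^sup>+ t. f t \<partial>mu1)"
proof -
  have "fst \<in> measurable g T"
    by (simp add: measurable_cong_sets[OF sets_coupling[OF g] refl])
  then have "(\<integral>\<^sup>+ z. f (fst z) \<partial>g) = (\<integral>\<^sup>+ t. f t \<partial>distr g T fst)"
    using f by (simp add: nn_integral_distr)
  then show ?thesis
    using g by (simp add: couplings_def)
qed

lemma nn_integral_coupling_snd:
  assumes g: "g \<in> couplings T mu1 mu2" and f: "f \<in> borel_measurable T"
  shows "(\<integral>\<^sup>+ z. f (snd z) \<partial>g) = (\<integral>\<^sup>+ t. f t \<partial>mu2)"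
proof -
  have "snd \<in> measurable g T"
    by (simp add: measurable_cong_sets[OF sets_coupling[OF g] refl])
  then have "(\<integral>\<^sup>+ z. f (snd z) \<partial>g) = (\<integral>\<^sup>+ t. f t \<partial>distr g T snd)"
    using f by (simp add: nn_integral_distr)
  then show ?thesis
    using g by (simp add: couplings_def)
qed

lemma pair_measure_in_couplings:
  assumes "mu1 \<in> space (prob_algebra T)" "mu2 \<in> space (prob_algebra T)"
  shows "mu1 \<Otimes>\<^sub>M mu2 \<in> couplings T mu1 mu2"
proof -
  have sets: "sets mu1 = sets T" "sets mu2 = sets T" and "prob_space mu1" "prob_space mu2"
    using assms by (auto simp: space_prob_algebra)
  then interpret P: pair_prob_space mu1 mu2
    by (simp add: pair_prob_space_def pair_sigma_finite_def prob_space_imp_sigma_finite)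
  have "distr (mu1 \<Otimes>\<^sub>M mu2) mu2 snd = mu2"
  proof (intro measure_eqI)
    fix A assume "A \<in> sets (distr (mu1 \<Otimes>\<^sub>M mu2) mu2 snd)"
    then have A: "A \<in> sets mu2"
      by simp
    then have "snd -` A \<inter> space (mu1 \<Otimes>\<^sub>M mu2) = space mu1 \<times> A"
      using sets.sets_into_space[OF A] by (auto simp: space_pair_measure)
    then have "emeasure (distr (mu1 \<Otimes>\<^sub>M mu2) mu2 snd) A = emeasure (mu1 \<Otimes>\<^sub>M mu2) (space mu1 \<times> A)"
      using A by (simp add: emeasure_distr)
    also have "\<dots> = emeasure mu1 (space mu1) * emeasure mu2 A"
      using A by (intro P.M2.emeasure_pair_measure_Times) simp_all
    finally show "emeasure (distr (mu1 \<Otimes>\<^sub>M mu2) mu2 snd) A = emeasure mu2 A"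
      by (simp add: P.M1.emeasure_space_1)
  qed simp
  moreover have "distr (mu1 \<Otimes>\<^sub>M mu2) mu1 fst = mu1"
    by (rule P.M2.distr_pair_fst)
  moreover have "distr (mu1 \<Otimes>\<^sub>M mu2) T fst = distr (mu1 \<Otimes>\<^sub>M mu2) mu1 fst"
    "distr (mu1 \<Otimes>\<^sub>M mu2) T snd = distr (mu1 \<Otimes>\<^sub>M mu2) mu2 snd"
    using sets by (auto intro: distr_cong)
  moreover have "sets (mu1 \<Otimes>\<^sub>M mu2) = sets (T \<Otimes>\<^sub>M T)"
    using sets by (rule sets_pair_measure_cong)
  ultimately show ?thesis
    unfolding couplings_def by simp
qed

context measurable_pseudometric
begin

declare measurable_rho [measurable]

definition expected_dist :: "'t measure \<Rightarrow> 't \<Rightarrow> ennreal" where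
  "expected_dist mu c = (\<integral>\<^sup>+ t. ennreal (rho t c) \<partial>mu)"

definition transport_cost :: "('t \<times> 't) measure \<Rightarrow> ennreal" where
  "transport_cost g = (\<integral>\<^sup>+ z. ennreal (rho (fst z) (snd z)) \<partial>g)"

lemma wasserstein1_eq_INF: "wasserstein1 rho T mu1 mu2 = (INF g \<in> couplings T mu1 mu2. transport_cost g)"
  by (simp add: wasserstein1_def transport_cost_def)

lemma measurable_rho_left [measurable]: "c \<in> space T \<Longrightarrow> (\<lambda>t. rho t c) \<in> borel_measurable T"
  using measurable_compose[OF measurable_Pair2' measurable_rho] by simp

lemma measurable_rho_right: "a \<in> space T \<Longrightarrow> (\<lambda>t. rho a t) \<in> borel_measurable T"
  using measurable_compose[OF measurable_Pair1' measurable_rho] by simp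

lemma measurable_expected_dist:
  "c \<in> space T \<Longrightarrow> (\<lambda>mu. expected_dist mu c) \<in> borel_measurable (prob_algebra T)"
  unfolding expected_dist_def
  by (rule measurable_compose[OF measurable_prob_algebraD[OF measurable_ident_sets[OF refl]]
        nn_integral_measurable_subprob_algebra]) measurable

lemma expected_dist_le_transport_cost:
  assumes g: "g \<in> couplings T mu1 mu2" and c: "c \<in> space T"
  shows "expected_dist mu2 c \<le> transport_cost g + expected_dist mu1 c"
    and "expected_dist mu1 c \<le> transport_cost g + expected_dist mu2 c"
proof -
  have triangle: "(\<integral>\<^sup>+ z. ennreal (rho (x z) c) \<partial>g) \<le> transport_cost g + (\<integral>\<^sup>+ z. ennreal (rho (y z) c) \<partial>g)"
    if [measurable]: "x \<in> measurable (T \<Otimes>\<^sub>M T) T" "y \<in> measurable (T \<Otimes>\<^sub>M T) T"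
      and le: "\<And>z. z \<in> space T \<times> space T \<Longrightarrow> rho (x z) c \<le> rho (fst z) (snd z) + rho (y z) c"
    for x y :: "'t \<times> 't \<Rightarrow> 't"
  proof -
    have "(\<integral>\<^sup>+ z. ennreal (rho (x z) c) \<partial>g)
        \<le> (\<integral>\<^sup>+ z. ennreal (rho (fst z) (snd z)) + ennreal (rho (y z) c) \<partial>g)"
      using le space_coupling[OF g] 
      by (intro nn_integral_mono) (simp add: rho_nonneg ennreal_leI flip: ennreal_plus)
    also have "\<dots> = transport_cost g + (\<integral>\<^sup>+ z. ennreal (rho (y z) c) \<partial>g)"
      unfolding transport_cost_def using c
      by (intro nn_integral_add measurable_coupling[OF g]) measurable
    finally show ?thesis .
  qed
  have "(\<lambda>t. ennreal (rho t c)) \<in> borel_measurable T"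
    using c by measurable
  note marginals = nn_integral_coupling_fst[OF g this] nn_integral_coupling_snd[OF g this]
  have "expected_dist mu2 c \<le> transport_cost g + expected_dist mu1 c"
  proof -
    have "rho (snd z) c \<le> rho (fst z) (snd z) + rho (fst z) c" if "z \<in> space T \<times> space T" for z
      using that c rho_triangle[of "snd z" "fst z" c] rho_sym[of "snd z" "fst z"] by auto
    then show ?thesis
      using triangle[of snd fst] c
      by (simp add: expected_dist_def marginals)
  qed
  moreover have "expected_dist mu1 c \<le> transport_cost g + expected_dist mu2 c"
  proof -
    have "rho (fst z) c \<le> rho (fst z) (snd z) + rho (snd z) c" if "z \<in> space T \<times> space T" for z
      using that c rho_triangle[of "fst z" "snd z" c] by auto
    then show ?thesis
      using triangle[of fst snd] c
      by (simp add: expected_dist_def marginals)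
  qed
  ultimately show "expected_dist mu2 c \<le> transport_cost g + expected_dist mu1 c"
    and "expected_dist mu1 c \<le> transport_cost g + expected_dist mu2 c"
    by auto
qed

lemma transport_cost_pair_measure:
  assumes mu: "mu \<in> space (prob_algebra T)" and nu: "nu \<in> space (prob_algebra T)"
  shows "transport_cost (mu \<Otimes>\<^sub>M nu) = (\<integral>\<^sup>+ s. \<integral>\<^sup>+ t. ennreal (rho s t) \<partial>nu \<partial>mu)"
proof -
  interpret nu: prob_space nu
    using nu by (simp add: space_prob_algebra)
  have "(\<lambda>z. ennreal (rho (fst z) (snd z))) \<in> borel_measurable (mu \<Otimes>\<^sub>M nu)"
    by (rule measurable_coupling[OF pair_measure_in_couplings[OF mu nu]]) measurable
  then show ?thesis
    unfolding transport_cost_def by (simp add: nu.nn_integral_fst[symmetric])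
qed

lemma wasserstein1_return:
  assumes mu: "mu \<in> space (prob_algebra T)" and c: "c \<in> space T"
  shows "wasserstein1 rho T mu (return T c) = expected_dist mu c"
proof (rule antisym)
  have ret: "return T c \<in> space (prob_algebra T)"
    using c by (simp add: space_prob_algebra prob_space_return)
  have "space mu = space T"
    using mu by (intro sets_eq_imp_space_eq) (simp add: space_prob_algebra)
  then have "transport_cost (mu \<Otimes>\<^sub>M return T c) = expected_dist mu c"
    unfolding transport_cost_pair_measure[OF mu ret] expected_dist_def
    using c measurable_rho_right by (intro nn_integral_cong nn_integral_return) auto
  moreover have "wasserstein1 rho T mu (return T c) \<le> transport_cost (mu \<Otimes>\<^sub>M return T c)"
    unfolding wasserstein1_eq_INF by (rule INF_lower[OF pair_measure_in_couplings[OF mu ret]])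
  ultimately show "wasserstein1 rho T mu (return T c) \<le> expected_dist mu c"
    by simp
  have "expected_dist (return T c) c = 0"
    using c by (simp add: expected_dist_def nn_integral_return rho_self)
  then have "expected_dist mu c \<le> transport_cost g" if "g \<in> couplings T mu (return T c)" for g
    using expected_dist_le_transport_cost(2)[OF that c] by simp
  then show "expected_dist mu c \<le> wasserstein1 rho T mu (return T c)"
    unfolding wasserstein1_eq_INF by (rule INF_greatest)
qed

lemma wasserstein1_le_expected_dist_add:
  assumes mu1: "mu1 \<in> space (prob_algebra T)" and mu2: "mu2 \<in> space (prob_algebra T)"
    and c: "c \<in> space T"
  shows "wasserstein1 rho T mu1 mu2 \<le> expected_dist mu1 c + expected_dist mu2 c"
proof -
  interpret mu1: prob_space mu1
    using mu1 by (simp add: space_prob_algebra)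
  interpret mu2: prob_space mu2
    using mu2 by (simp add: space_prob_algebra)
  have sets: "sets mu1 = sets T" "sets mu2 = sets T"
    using mu1 mu2 by (simp_all add: space_prob_algebra)
  have space: "space mu1 = space T" "space mu2 = space T"
    using sets_eq_imp_space_eq[OF sets(1)] sets_eq_imp_space_eq[OF sets(2)] .
  have [measurable]: "(\<lambda>t. ennreal (rho t c)) \<in> borel_measurable mu1"
    "(\<lambda>t. ennreal (rho t c)) \<in> borel_measurable mu2"
    using c by (simp_all add: measurable_cong_sets[OF sets(1) refl] measurable_cong_sets[OF sets(2) refl])
  have "transport_cost (mu1 \<Otimes>\<^sub>M mu2) \<le> (\<integral>\<^sup>+ s. \<integral>\<^sup>+ t. ennreal (rho s c) + ennreal (rho t c) \<partial>mu2 \<partial>mu1)"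
    unfolding transport_cost_pair_measure[OF mu1 mu2]
  proof (intro nn_integral_mono)
    fix s t assume "s \<in> space mu1" "t \<in> space mu2"
    then have "rho s t \<le> rho s c + rho t c"
      using space c rho_triangle[of s c t] rho_sym[of c t] by simp
    then show "ennreal (rho s t) \<le> ennreal (rho s c) + ennreal (rho t c)"
      by (simp add: rho_nonneg ennreal_leI flip: ennreal_plus)
  qed
  also have "\<dots> = expected_dist mu1 c + expected_dist mu2 c"
    by (simp add: expected_dist_def nn_integral_add mu1.emeasure_space_1 mu2.emeasure_space_1)
  finally have "transport_cost (mu1 \<Otimes>\<^sub>M mu2) \<le> expected_dist mu1 c + expected_dist mu2 c" .
  moreover have "wasserstein1 rho T mu1 mu2 \<le> transport_cost (mu1 \<Otimes>\<^sub>M mu2)"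
    unfolding wasserstein1_eq_INF by (rule INF_lower[OF pair_measure_in_couplings[OF mu1 mu2]])
  ultimately show ?thesis
    by simp
qed

lemma expected_dist_le_wasserstein1_add:
  assumes c: "c \<in> space T" and finite: "expected_dist mu1 c \<noteq> \<top>"
  shows "expected_dist mu2 c \<le> wasserstein1 rho T mu1 mu2 + expected_dist mu1 c"
proof -
  have "expected_dist mu2 c - expected_dist mu1 c \<le> wasserstein1 rho T mu1 mu2"
    unfolding wasserstein1_eq_INF
    using expected_dist_le_transport_cost(1)[OF _ c] finite
    by (intro INF_greatest) (simp add: ennreal_minus_le_iff add.commute)
  then show ?thesis
    using finite by (simp add: ennreal_minus_le_iff add.commute)
qed

end

lemma card_filter_add_card_filter_not:
  "finite A \<Longrightarrow> card {x \<in> A. P x} + card {x \<in> A. \<not> P x} = card A"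
  by (subst card_Un_disjoint[symmetric]) (auto intro: arg_cong[where f=card])

lemma majorities_intersect:
  assumes "I \<subseteq> {1..m}" "J \<subseteq> {1..m}" "real (card I) > real m / 2" "real (card J) > real m / 2"
  shows "I \<inter> J \<noteq> {}"
proof
  assume "I \<inter> J = {}"
  then have "card I + card J = card (I \<union> J)"
    using assms(1,2) by (simp add: card_Un_disjoint finite_subset)
  also have "\<dots> \<le> m"
    using assms(1,2) card_mono[of "{1..m}" "I \<union> J"] by simp
  finally show False
    using assms(3,4) by linarith
qed

lemma eps_star_le:
  assumes "0 < eps" "j \<in> {1..m}" "I \<subseteq> {1..m}" "real (card I) > real m / 2"
    and "\<And>i. i \<in> I \<Longrightarrow> d (q i) (q j) \<le> ennreal (2 * eps)"
  shows "eps_star d q m \<le> eps"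
  unfolding eps_star_def
proof (rule cInf_lower)
  show "eps \<in> {eps. eps > 0 \<and> (\<exists>j\<in>{1..m}. \<exists>I. I \<subseteq> {1..m} \<and> real (card I) > real m / 2 \<and>
      (\<forall>i\<in>I. d (q i) (q j) \<le> ennreal (2 * eps)))}"
    using assms by (auto intro!: bexI[of _ j] exI[of _ I])
qed (auto intro: bdd_belowI[where m=0])

lemma metric_median_index_le_3eps:
  fixes d :: "'m \<Rightarrow> 'm \<Rightarrow> ennreal" and f :: "'m \<Rightarrow> ennreal"
  assumes median: "metric_median_index d q m j"
    and dist_le: "\<And>i k. i \<in> {1..m} \<Longrightarrow> k \<in> {1..m} \<Longrightarrow> d (q i) (q k) \<le> f (q i) + f (q k)"
    and f_le: "\<And>i k. i \<in> {1..m} \<Longrightarrow> k \<in> {1..m} \<Longrightarrow> f (q i) \<noteq> \<top> \<Longrightarrow> f (q k) \<le> d (q i) (q k) + f (q i)"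
    and C: "C \<subseteq> {1..m}" "real (card C) > real m / 2" "\<And>i. i \<in> C \<Longrightarrow> f (q i) \<le> ennreal eps"
    and eps: "0 < eps"
  shows "f (q j) \<le> ennreal (3 * eps)"
proof -
  have two_eps: "ennreal eps + ennreal eps = ennreal (2 * eps)"
    using eps by (simp flip: ennreal_plus)
  obtain j0 where j0: "j0 \<in> C"
    using C(2) by fastforce
  have "d (q i) (q j0) \<le> ennreal (2 * eps)" if "i \<in> C" for i
  proof -
    have "d (q i) (q j0) \<le> f (q i) + f (q j0)"
      using that j0 C(1) dist_le by blast
    also have "\<dots> \<le> ennreal eps + ennreal eps"
      using that j0 C(3) by (intro add_mono) auto
    finally show ?thesis
      unfolding two_eps .
  qed
  then have eps_star: "eps_star d q m \<le> eps"
    using eps j0 C by (intro eps_star_le[where j=j0 and I=C]) auto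
  obtain I where j: "j \<in> {1..m}" and I: "I \<subseteq> {1..m}" "real (card I) > real m / 2"
    and close: "\<And>i. i \<in> I \<Longrightarrow> d (q i) (q j) \<le> ennreal (2 * eps_star d q m)"
    using median unfolding metric_median_index_def by blast
  obtain i where "i \<in> C" "i \<in> I"
    using majorities_intersect[OF C(1) I(1) C(2) I(2)] by blast
  moreover have "d (q i) (q j) \<le> ennreal (2 * eps)"
    using close[OF \<open>i \<in> I\<close>] eps_star by (meson ennreal_leI mult_left_mono order_trans zero_le_numeral)
  ultimately have "f (q j) \<le> ennreal (2 * eps) + ennreal eps"
    using f_le[of i j] C j by (metis add_mono top_neq_ennreal order_trans neq_top_trans subsetD)
  also have "\<dots> = ennreal (3 * eps)"
    using eps by (simp flip: ennreal_plus)
  finally show ?thesis .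
qed

context measurable_pseudometric
begin

lemma sets_wasserstein1_return_greater:
  assumes c: "c \<in> space T"
  shows "{mu \<in> space (prob_algebra T). ennreal eps < wasserstein1 rho T mu (return T c)}
    \<in> sets (prob_algebra T)"
proof -
  have "{mu \<in> space (prob_algebra T). ennreal eps < wasserstein1 rho T mu (return T c)}
      = {mu \<in> space (prob_algebra T). ennreal eps < expected_dist mu c}"
    using c by (auto simp: wasserstein1_return)
  also have "\<dots> \<in> sets (prob_algebra T)"
    by (rule borel_measurable_less[OF measurable_const measurable_expected_dist[OF c]]) simp
  finally show ?thesis .
qed

lemma card_far_ge_if_median_far:
  assumes q: "\<And>i. i \<in> {1..m} \<Longrightarrow> q i \<in> space (prob_algebra T)" and c: "c \<in> space T"
    and median: "metric_median_index (wasserstein1 rho T) q m j"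
    and G: "G \<subseteq> {1..m}" and eps: "0 < eps"
    and far: "ennreal (3 * eps) < wasserstein1 rho T (q j) (return T c)"
  shows "real (card G) - real m / 2 \<le> real (card {i \<in> G. ennreal eps < wasserstein1 rho T (q i) (return T c)})"
proof (rule ccontr)
  define C where "C = {i \<in> G. \<not> ennreal eps < wasserstein1 rho T (q i) (return T c)}"
  assume "\<not> ?thesis"
  moreover have "card {i \<in> G. ennreal eps < wasserstein1 rho T (q i) (return T c)} + card C = card G"
    unfolding C_def using G by (intro card_filter_add_card_filter_not) (simp add: finite_subset)
  ultimately have "real (card C) > real m / 2"
    by linarith
  moreover have j: "j \<in> {1..m}"
    using median by (simp add: metric_median_index_def)
  moreover have "expected_dist (q i) c \<le> ennreal eps" if "i \<in> C" for i
    using that G q[of i] c by (auto simp: C_def not_less wasserstein1_return)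
  ultimately have "expected_dist (q j) c \<le> ennreal (3 * eps)"
    using G eps q c
    by (intro metric_median_index_le_3eps[OF median, where f="\<lambda>mu. expected_dist mu c" and C=C])
      (auto simp: C_def intro: wasserstein1_le_expected_dist_add expected_dist_le_wasserstein1_add)
  then show False
    using far wasserstein1_return[OF q[OF j] c] by simp
qed

end

lemma (in prob_space) events_card_ge:
  assumes X: "\<And>j. j \<in> G \<Longrightarrow> X j \<in> measurable M (N j)" and G: "finite G"
    and S: "\<And>j. j \<in> G \<Longrightarrow> S j \<in> sets (N j)"
  shows "{w \<in> space M. k \<le> real (card {j \<in> G. X j w \<in> S j})} \<in> events"
proof -
  have "X j -` S j \<inter> space M \<in> events" if "j \<in> G" for j
    using measurable_sets[OF X S, OF that that] .
  then have "(\<lambda>w. \<Sum>j\<in>G. indicator (X j -` S j \<inter> space M) w :: real) \<in> borel_measurable M"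
    by measurable
  then have "{w \<in> space M. k \<le> (\<Sum>j\<in>G. indicator (X j -` S j \<inter> space M) w :: real)} \<in> events"
    by (intro borel_measurable_le) simp_all
  moreover have "real (card {j \<in> G. X j w \<in> S j}) = (\<Sum>j\<in>G. indicator (X j -` S j \<inter> space M) w)"
    if "w \<in> space M" for w
    using G that by (simp add: indicator_def of_bool_def sum.If_cases Int_def)
  ultimately show ?thesis
    by (metis (no_types, lifting) Collect_cong)
qed

lemma (in prob_space) prob_card_ge_le:
  fixes X :: "'i \<Rightarrow> 'a \<Rightarrow> 'b" and S :: "'i \<Rightarrow> 'b set" and k q r :: real
  assumes indep: "indep_vars N X G" and G: "finite G"
    and S: "\<And>j. j \<in> G \<Longrightarrow> S j \<in> sets (N j)"
    and prob: "\<And>j. j \<in> G \<Longrightarrow> prob {w \<in> space M. X j w \<in> S j} \<le> q"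
    and r: "1 \<le> r"
  shows "prob {w \<in> space M. k \<le> real (card {j \<in> G. X j w \<in> S j})}
    \<le> r powr (- k) * (1 + (r - 1) * q) ^ card G"
proof -
  define B where "B j = {w \<in> space M. X j w \<in> S j}" for j
  define Y where "Y j w = (if X j w \<in> S j then r else 1)" for j w
  define A where "A = {w \<in> space M. k \<le> real (card {j \<in> G. X j w \<in> S j})}"
  have X: "X j \<in> measurable M (N j)" if "j \<in> G" for j
    using indep that by (simp add: indep_vars_def2)
  have B: "B j \<in> events" if "j \<in> G" for j
    using measurable_sets[OF X S, OF that that] unfolding B_def by (simp add: vimage_def Int_def conj_commute)
  have indep_Y: "indep_vars (\<lambda>_. borel) Y G"
    unfolding Y_def using S by (intro indep_vars_compose2[OF indep] measurable_If_set) auto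
  have Y_int: "integrable M (Y j)" if "j \<in> G" for j
    using indep_Y that r by (intro integrable_const_bound[where B=r]) (auto simp: indep_vars_def2 Y_def)
  have "expectation (Y j) \<le> 1 + (r - 1) * q" if j: "j \<in> G" for j
  proof -
    have "expectation (Y j) = expectation (\<lambda>w. 1 + (r - 1) * indicator (B j) w)"
      by (intro Bochner_Integration.integral_cong) (auto simp: Y_def B_def)
    also have "\<dots> = 1 + (r - 1) * prob (B j)"
      using B[OF j] integrable_real_indicator[OF B[OF j]]
      by (simp add: prob_space emeasure_finite less_top[symmetric])
    also have "\<dots> \<le> 1 + (r - 1) * q"
      using prob[OF j] r by (simp add: B_def mult_left_mono)
    finally show ?thesis .
  qed
  then have "(\<Prod>j\<in>G. expectation (Y j)) \<le> (\<Prod>j\<in>G. 1 + (r - 1) * q)"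
    using r by (intro prod_mono) (simp add: Y_def integral_nonneg)
  then have prod_le: "expectation (\<lambda>w. \<Prod>j\<in>G. Y j w) \<le> (1 + (r - 1) * q) ^ card G"
    by (simp add: indep_vars_lebesgue_integral[OF G indep_Y Y_int])
  have markov: "indicator A w \<le> r powr (- k) * (\<Prod>j\<in>G. Y j w)" for w
  proof -
    have prod_eq: "(\<Prod>j\<in>G. Y j w) = r powr real (card {j \<in> G. X j w \<in> S j})"
      using G r by (simp add: Y_def prod.If_cases powr_realpow Int_def)
    show ?thesis
    proof (cases "w \<in> A")
      case True
      then have "1 \<le> r powr (real (card {j \<in> G. X j w \<in> S j}) - k)"
        using r by (intro ge_one_powr_ge_zero) (simp_all add: A_def)
      then show ?thesis
        using True by (simp add: prod_eq powr_diff divide_inverse powr_minus mult.commute)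
    qed (simp add: prod_eq)
  qed
  have A: "A \<in> events"
    unfolding A_def using X G S by (rule events_card_ge)
  have "prob A = expectation (indicator A)"
    using A by simp
  also have "\<dots> \<le> expectation (\<lambda>w. r powr (- k) * (\<Prod>j\<in>G. Y j w))"
    using markov A indep_vars_integrable[OF G indep_Y Y_int]
    by (intro integral_mono) (simp_all add: emeasure_finite less_top[symmetric])
  also have "\<dots> \<le> r powr (- k) * (1 + (r - 1) * q) ^ card G"
    using prod_le by (simp add: mult_left_mono)
  finally show ?thesis
    unfolding A_def .
qed

lemma chernoff_exponent_le:
  fixes \<kappa> :: real and m n :: nat
  assumes \<kappa>: "0 \<le> \<kappa>" "\<kappa> < 1/3" and n: "(1 - \<kappa>) * real m \<le> real n"
  shows "\<exists>r\<ge>1. r powr (- (real n - real m / 2)) * (1 + (r - 1) * (1/4)) ^ n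
    \<le> (exp ((1 - \<kappa>) * psi ((1/2 - \<kappa>) / (1 - \<kappa>)) (1/4))) powr (- real m)"
proof -
  define \<alpha> where "\<alpha> = (1/2 - \<kappa>) / (1 - \<kappa>)"
  define r where "r = 3 * \<alpha> / (1 - \<alpha>)"
  have \<alpha>_\<kappa>: "\<alpha> * (1 - \<kappa>) = 1/2 - \<kappa>"
    using \<kappa> by (simp add: \<alpha>_def)
  have \<alpha>: "1/4 < \<alpha>" "\<alpha> \<le> 1/2"
    using \<kappa> by (simp_all add: \<alpha>_def field_simps)
  define L1 where "L1 = ln (4 * \<alpha>)"
  define L2 where "L2 = ln (4 * (1 - \<alpha>) / 3)"
  have r: "1 \<le> r" "0 < r"
    using \<alpha> by (simp_all add: r_def field_simps)
  have r_eq: "r = (4 * \<alpha>) / (4 * (1 - \<alpha>) / 3)"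
    using \<alpha> by (simp add: r_def field_simps)
  have ln_r: "ln r = L1 - L2"
    unfolding r_eq L1_def L2_def using \<alpha> by (intro ln_divide_pos) simp_all
  have tilt: "1 + (r - 1) * (1/4) = inverse (4 * (1 - \<alpha>) / 3)"
    using \<alpha> by (simp add: r_def field_simps)
  have "(1 - \<alpha>) / (1 - 1/4) = 4 * (1 - \<alpha>) / 3" "\<alpha> / (1/4) = 4 * \<alpha>"
    by simp_all
  then have "(1 - \<kappa>) * psi \<alpha> (1/4) = (1 - \<kappa>) * ((1 - \<alpha>) * L2 + \<alpha> * L1)"
    unfolding psi_def L1_def L2_def by metis
  also have "\<dots> = (1 - \<kappa>) * L2 - (\<alpha> * (1 - \<kappa>)) * L2 + (\<alpha> * (1 - \<kappa>)) * L1"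
    by (simp add: algebra_simps)
  also have "\<dots> = (1/2) * L2 + (1/2 - \<kappa>) * L1"
    unfolding \<alpha>_\<kappa> by (simp add: algebra_simps)
  finally have psi: "(1 - \<kappa>) * psi \<alpha> (1/4) = (1/2) * L2 + (1/2 - \<kappa>) * L1" .
  have "1 + (r - 1) * (1/4) = exp (- L2)"
    unfolding tilt L2_def using \<alpha> by (simp add: exp_minus)
  then have "r powr (- (real n - real m / 2)) * (1 + (r - 1) * (1/4)) ^ n
      = exp (- (real n - real m / 2) * (L1 - L2)) * exp (real n * (- L2))"
    using r by (simp add: powr_def ln_r exp_of_nat_mult[symmetric])
  also have "\<dots> = exp (- (real n - real m / 2) * (L1 - L2) - real n * L2)"
    by (simp flip: exp_add)
  also have "\<dots> \<le> exp ((1 - \<kappa>) * psi \<alpha> (1/4) * (- real m))"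
  proof -
    have "(1 - \<kappa>) * psi \<alpha> (1/4) * (- real m) - (- (real n - real m / 2) * (L1 - L2) - real n * L2)
        = L1 * (real n - (1 - \<kappa>) * real m)"
      unfolding psi by (simp add: field_simps)
    moreover have "0 \<le> L1 * (real n - (1 - \<kappa>) * real m)"
      using \<alpha> n by (simp add: L1_def)
    ultimately show ?thesis
      by simp
  qed
  also have "\<dots> = (exp ((1 - \<kappa>) * psi \<alpha> (1/4))) powr (- real m)"
    by (simp add: exp_powr_real)
  finally show ?thesis
    using r unfolding \<alpha>_def by blast
qed

lemma card_initial_segment_ge:
  fixes x :: real
  assumes "0 \<le> x" "x \<le> real m"
  shows "x \<le> real (card {j \<in> {1..m}. j \<le> nat \<lfloor>x\<rfloor> + 1})"
proof -
  have "{j \<in> {1..m}. j \<le> nat \<lfloor>x\<rfloor> + 1} = {1..min m (nat \<lfloor>x\<rfloor> + 1)}"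
    by auto
  moreover have "x \<le> real (min m (nat \<lfloor>x\<rfloor> + 1))"
    using assms by linarith
  ultimately show ?thesis
    by simp
qed

lemma outer_prob_le_measure:
  "A \<in> sets M \<Longrightarrow> S \<inter> space M \<subseteq> A \<Longrightarrow> outer_prob M S \<le> measure M A"
  unfolding outer_prob_def by (rule cINF_lower) (auto intro: bdd_belowI2[where m=0])

lemma (in measurable_pseudometric) outer_prob_median_far_le:
  fixes Q :: "nat \<Rightarrow> 'w \<Rightarrow> 't measure" and jstar :: "'w \<Rightarrow> nat" and eps q r :: real
  assumes "prob_space M" and indep: "prob_space.indep_vars M (\<lambda>_. prob_algebra T) Q {1..m}"
    and c: "c \<in> space T" and eps: "0 < eps" and r: "1 \<le> r" and G: "G \<subseteq> {1..m}"
    and good: "\<And>j. j \<in> G \<Longrightarrow>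
      measure M {w \<in> space M. wasserstein1 rho T (Q j w) (return T c) > ennreal eps} \<le> q"
    and median: "\<And>w. w \<in> space M \<Longrightarrow> metric_median_index (wasserstein1 rho T) (\<lambda>j. Q j w) m (jstar w)"
  shows "outer_prob M {w \<in> space M. wasserstein1 rho T (Q (jstar w) w) (return T c) > ennreal (3 * eps)}
    \<le> r powr (- (real (card G) - real m / 2)) * (1 + (r - 1) * q) ^ card G"
proof -
  interpret prob_space M
    by fact
  define W where "W mu = wasserstein1 rho T mu (return T c)" for mu
  define S where "S = {mu \<in> space (prob_algebra T). ennreal eps < W mu}"
  define A where "A = {w \<in> space M. real (card G) - real m / 2 \<le> real (card {j \<in> G. Q j w \<in> S})}"
  have finite_G: "finite G"
    using G finite_subset by blast
  have Q_meas: "Q j \<in> measurable M (prob_algebra T)" if "j \<in> {1..m}" for j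
    using indep that by (simp add: indep_vars_def2)
  have Q: "Q j w \<in> space (prob_algebra T)" if "j \<in> {1..m}" "w \<in> space M" for j w
    using measurable_space[OF Q_meas] that .
  have S_sets: "S \<in> sets (prob_algebra T)"
    unfolding S_def W_def by (rule sets_wasserstein1_return_greater[OF c])
  have far_iff: "Q j w \<in> S \<longleftrightarrow> ennreal eps < W (Q j w)" if "j \<in> G" "w \<in> space M" for j w
    using that G Q by (auto simp: S_def)
  have "prob {w \<in> space M. Q j w \<in> S} \<le> q" if "j \<in> G" for j
  proof -
    have "{w \<in> space M. Q j w \<in> S} = {w \<in> space M. W (Q j w) > ennreal eps}"
      using far_iff[OF that] by auto
    then show ?thesis
      using good[OF that] by (simp add: W_def)
  qed
  then have prob_A: "prob A \<le> r powr (- (real (card G) - real m / 2)) * (1 + (r - 1) * q) ^ card G"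
    unfolding A_def using finite_G S_sets r
    by (intro prob_card_ge_le[OF indep_vars_subset[OF indep G], where S="\<lambda>_. S"]) simp_all
  have "w \<in> A" if w: "w \<in> space M" and far: "ennreal (3 * eps) < W (Q (jstar w) w)" for w
  proof -
    have "{j \<in> G. Q j w \<in> S} = {j \<in> G. ennreal eps < W (Q j w)}"
      using far_iff w by auto
    then show ?thesis
      using card_far_ge_if_median_far[OF Q[OF _ w] c median[OF w] G eps far[unfolded W_def]] w
      unfolding A_def W_def by simp
  qed
  moreover have "A \<in> events"
    unfolding A_def using finite_G G Q_meas S_sets by (intro events_card_ge) auto
  ultimately have "outer_prob M {w \<in> space M. W (Q (jstar w) w) > ennreal (3 * eps)} \<le> prob A"
    by (intro outer_prob_le_measure) auto
  with prob_A show ?thesis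
    unfolding W_def by simp
qed

theorem theorem6:
  fixes M :: "'w measure" and T :: "'t measure" and nu :: "'x measure"
    and p :: "'t \<Rightarrow> 'x \<Rightarrow> real" and t0 :: 't
    and Q :: "nat \<Rightarrow> 'w \<Rightarrow> 't measure" and jstar :: "'w \<Rightarrow> nat"
    and m :: nat and \<kappa> \<epsilon> :: real
  assumes model_meas: "(\<lambda>(t, x). p t x) \<in> borel_measurable (T \<Otimes>\<^sub>M nu)"
    and sf: "sigma_finite_measure nu"
    and dens_nonneg: "\<And>t x. t \<in> space T \<Longrightarrow> x \<in> space nu \<Longrightarrow> 0 \<le> p t x"
    and dens_one: "\<And>t. t \<in> space T \<Longrightarrow> (\<integral>\<^sup>+ x. ennreal (p t x) \<partial>nu) = 1"
    and t0: "t0 \<in> space T"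
    and ps: "prob_space M"
    and indep: "prob_space.indep_vars M (\<lambda>_. prob_algebra T) Q {1..m}"
    and kappa: "0 \<le> \<kappa>" "\<kappa> < 1/3"
    and eps: "\<epsilon> > 0"
    and good: "\<And>j. j \<in> {1..m} \<Longrightarrow> j \<le> nat \<lfloor>(1 - \<kappa>) * real m\<rfloor> + 1 \<Longrightarrow>
        measure M {w \<in> space M.
          wasserstein1 (hellinger nu p) T (Q j w) (return T t0) > ennreal \<epsilon>} \<le> 1/4"
    and median: "\<And>w. w \<in> space M \<Longrightarrow>
        metric_median_index (wasserstein1 (hellinger nu p) T) (\<lambda>j. Q j w) m (jstar w)"
  shows "outer_prob M {w \<in> space M.
           wasserstein1 (hellinger nu p) T (Q (jstar w) w) (return T t0) > ennreal (3 * \<epsilon>)}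
         \<le> (exp ((1 - \<kappa>) * psi ((1/2 - \<kappa>) / (1 - \<kappa>)) (1/4))) powr (- real m)"
proof -
  interpret measurable_pseudometric T "hellinger nu p"
    by (rule measurable_pseudometric_hellinger[OF model_meas sf dens_nonneg dens_one])
  define G where "G = {j \<in> {1..m}. j \<le> nat \<lfloor>(1 - \<kappa>) * real m\<rfloor> + 1}"
  have "(1 - \<kappa>) * real m \<le> real (card G)"
    unfolding G_def using kappa by (intro card_initial_segment_ge) (simp_all add: mult_left_le_one_le)
  then obtain r where r: "1 \<le> r" and r_bound: "r powr (- (real (card G) - real m / 2))
      * (1 + (r - 1) * (1/4)) ^ card G \<le> (exp ((1 - \<kappa>) * psi ((1/2 - \<kappa>) / (1 - \<kappa>)) (1/4))) powr (- real m)"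
    using chernoff_exponent_le[OF kappa] by blast
  have "outer_prob M {w \<in> space M.
      wasserstein1 (hellinger nu p) T (Q (jstar w) w) (return T t0) > ennreal (3 * \<epsilon>)}
    \<le> r powr (- (real (card G) - real m / 2)) * (1 + (r - 1) * (1/4)) ^ card G"
    using good by (intro outer_prob_median_far_le[OF ps indep t0 eps r _ _ median]) (auto simp: G_def)
  with r_bound show ?thesis
    by linarith
qed

end
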